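(* Let $m$ be a positive integer, $\lambda\in\mathbb{R}$ with $|\lambda-m|<1/10$, $R=\sqrt\lambda$, $w=(0,2)$. If $v\in V_2$ satisfies $B:=|\langle v,w\rangle|\ge R^{1/3}$, then, as $R\to\infty$, $$|S_w(v)|\ll\frac{\log^2 B}{B^2},$$ with an absolute implied constant.
   Context: For $v\in\mathbb{Z}^2$, $c(v)=\frac{1}{|v|^2-\lambda}$ and $C(v,w)=c(v)c(v+w)$. $V_2=\{v\in\mathbb{Z}^2: C(v,w)<0,\ |v|^2\ne m,\ |v+w|^2\ne m,\ \sqrt R/2\le|\langle v,w\rangle|\le3R\}$. $\operatorname{Nbr}_w(v)=\{C(v-w,w)+C(v,w),\ C(v,w)+C(v+w,w)\}$ and $S_w(v)$ is the element of $\operatorname{Nbr}_w(v)$ of smallest absolute value (the smaller one in case of a tie). *)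

theory Defs
  imports Complex_Main
begin

definition vadd :: "int \<times> int \<Rightarrow> int \<times> int \<Rightarrow> int \<times> int" where
  "vadd v w = (fst v + fst w, snd v + snd w)"

definition vsub :: "int \<times> int \<Rightarrow> int \<times> int \<Rightarrow> int \<times> int" where
  "vsub v w = (fst v - fst w, snd v - snd w)"

definition normsq :: "int \<times> int \<Rightarrow> int" where
  "normsq v = (fst v)^2 + (snd v)^2"

definition zinner :: "int \<times> int \<Rightarrow> int \<times> int \<Rightarrow> int" where
  "zinner v w = fst v * fst w + snd v * snd w"

definition cfun :: "real \<Rightarrow> int \<times> int \<Rightarrow> real" where
  "cfun lam v = 1 / (real_of_int (normsq v) - lam)"

definition Cfun :: "real \<Rightarrow> int \<times> int \<Rightarrow> int \<times> int \<Rightarrow> real" where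
  "Cfun lam v w = cfun lam v * cfun lam (vadd v w)"

definition V2 :: "real \<Rightarrow> int \<Rightarrow> int \<times> int \<Rightarrow> (int \<times> int) set" where
  "V2 lam m w = {v. Cfun lam v w < 0 \<and> normsq v \<noteq> m \<and> normsq (vadd v w) \<noteq> m \<and>
      sqrt (sqrt lam) / 2 \<le> \<bar>real_of_int (zinner v w)\<bar> \<and>
      \<bar>real_of_int (zinner v w)\<bar> \<le> 3 * sqrt lam}"

definition Nbr :: "real \<Rightarrow> int \<times> int \<Rightarrow> int \<times> int \<Rightarrow> real set" where
  "Nbr lam w v = {Cfun lam (vsub v w) w + Cfun lam v w, Cfun lam v w + Cfun lam (vadd v w) w}"

definition Sw :: "real \<Rightarrow> int \<times> int \<Rightarrow> int \<times> int \<Rightarrow> real" where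
  "Sw lam w v =
     (let a = Cfun lam (vsub v w) w + Cfun lam v w;
          b = Cfun lam v w + Cfun lam (vadd v w) w
      in if \<bar>a\<bar> < \<bar>b\<bar> then a else if \<bar>b\<bar> < \<bar>a\<bar> then b else min a b)"

end

theory Submission
  imports Defs
begin

text \<open>Put x = |v|^2 - lambda, and let u, y, z be the same quantity at v - w, v + w, v + 2w.
  These are consecutive values of a quadratic with second difference 2|w|^2 = 8, so
  C(v-w,w) + C(v,w) = (u + y)/(u x y) = (2x + 8)/(u x y), and similarly for the other
  neighbour sum. Since C(v,w) < 0, x and y have opposite signs and |x| + |y| = |y - x| = 2B + O(1);
  the larger of |x|, |y| is then about B, and the outer value next to it is even further
  from zero, which makes one of the two neighbour sums O(1/B^2).\<close>

lemma normsq_vadd: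
  "normsq (vadd v w) = normsq v + 2 * zinner v w + normsq w"
  by (simp add: normsq_def vadd_def zinner_def power2_eq_square algebra_simps)

lemma normsq_parallelogram:
  "normsq (vadd v w) + normsq (vsub v w) = 2 * normsq v + 2 * normsq w"
  by (simp add: normsq_def vadd_def vsub_def power2_eq_square algebra_simps)

lemma vsub_vadd_cancel [simp]: "vsub (vadd v w) w = v"
  by (simp add: vadd_def vsub_def)

lemma vadd_vsub_cancel [simp]: "vadd (vsub v w) w = v"
  by (simp add: vadd_def vsub_def)

lemma abs_Sw_eq_min:
  "\<bar>Sw lam w v\<bar> = min \<bar>Cfun lam (vsub v w) w + Cfun lam v w\<bar> \<bar>Cfun lam v w + Cfun lam (vadd v w) w\<bar>"
  by (auto simp: Sw_def Let_def min_def)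

lemma abs_of_int_minus_ge:
  fixes n m :: int and lam :: real
  assumes "n \<noteq> m" "\<bar>lam - real_of_int m\<bar> < 1/10"
  shows "\<bar>real_of_int n - lam\<bar> \<ge> 9/10"
proof -
  have "\<bar>real_of_int n - real_of_int m\<bar> \<ge> 1"
  proof -
    have "\<bar>n - m\<bar> \<ge> 1" using assms(1) by linarith
    then show ?thesis by (metis of_int_1_le_iff of_int_abs of_int_diff)
  qed
  then show ?thesis using assms(2) by linarith
qed

lemma neighbour_sum_bound:
  fixes u x y :: real
  assumes second_diff: "u + y = 2 * x + 8" and opposite: "x * y < 0"
    and x_far: "\<bar>x\<bar> \<ge> 4/5" and y_large: "\<bar>y - x\<bar> \<le> 2 * \<bar>y\<bar>" and gap: "\<bar>y - x\<bar> > 8"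
  shows "\<bar>1/u * (1/x) + 1/x * (1/y)\<bar> \<le> 24 / (\<bar>y - x\<bar> * (\<bar>y - x\<bar> - 8))"
proof -
  define d where "d = \<bar>y - x\<bar>"
  have x0: "x \<noteq> 0" and y0: "y \<noteq> 0" using opposite by auto
  \<comment> \<open>u = x - (y - x) + 8, and x and x - y have the same sign\<close>
  have u_large: "\<bar>u\<bar> \<ge> d - 8"
    using second_diff opposite unfolding d_def
    by (cases "x < 0"; cases "y < 0") (auto simp: mult_less_0_iff)
  then have u0: "u \<noteq> 0" and u_pos: "\<bar>u\<bar> > 0" using gap d_def by auto
  have "1/u * (1/x) + 1/x * (1/y) = (2 * x + 8) / (x * (u * y))"
    using x0 y0 u0 second_diff by (simp add: field_simps)
  then have "\<bar>1/u * (1/x) + 1/x * (1/y)\<bar> = \<bar>2 * x + 8\<bar> / \<bar>x\<bar> / (\<bar>u\<bar> * \<bar>y\<bar>)"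
    by (simp add: abs_mult divide_divide_eq_left mult.commute)
  also have "\<dots> \<le> 12 / (\<bar>u\<bar> * \<bar>y\<bar>)"
    using x_far x0 u_pos y0 by (intro divide_right_mono) (auto simp: divide_le_eq)
  also have "\<dots> \<le> 12 / ((d - 8) * (d / 2))"
    using u_large y_large gap u_pos unfolding d_def
    by (intro divide_left_mono mult_mono) auto
  also have "\<dots> = 24 / (d * (d - 8))" by (simp add: field_simps)
  finally show ?thesis unfolding d_def .
qed

lemma min_neighbour_sums_bound:
  fixes u x y z :: real
  assumes "u + y = 2 * x + 8" "x + z = 2 * y + 8" "x * y < 0"
    and "\<bar>x\<bar> \<ge> 4/5" "\<bar>y\<bar> \<ge> 4/5" "\<bar>y - x\<bar> > 8"
  shows "min \<bar>1/u * (1/x) + 1/x * (1/y)\<bar> \<bar>1/x * (1/y) + 1/y * (1/z)\<bar>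
           \<le> 24 / (\<bar>y - x\<bar> * (\<bar>y - x\<bar> - 8))"
proof -
  have "\<bar>y - x\<bar> = \<bar>x\<bar> + \<bar>y\<bar>"
    using assms(3) by (auto simp: mult_less_0_iff)
  then consider "\<bar>y - x\<bar> \<le> 2 * \<bar>y\<bar>" | "\<bar>x - y\<bar> \<le> 2 * \<bar>x\<bar>" by linarith
  then show ?thesis
  proof cases
    case 1
    then show ?thesis using neighbour_sum_bound[of u y x] assms by (simp add: min.coboundedI1)
  next
    case 2
    then have "\<bar>1/z * (1/y) + 1/y * (1/x)\<bar> \<le> 24 / (\<bar>x - y\<bar> * (\<bar>x - y\<bar> - 8))"
      using neighbour_sum_bound[of z x y] assms by (simp add: algebra_simps abs_minus_commute)
    then show ?thesis by (simp add: abs_minus_commute mult.commute min.coboundedI2)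
  qed
qed

lemma gap_product_ge_square:
  fixes B :: real
  assumes "\<bar>B\<bar> \<ge> 12"
  shows "B^2 \<le> \<bar>2 * B + 4\<bar> * (\<bar>2 * B + 4\<bar> - 8)"
proof -
  have "\<bar>B\<bar> \<le> \<bar>2 * B + 4\<bar>" "\<bar>B\<bar> \<le> \<bar>2 * B + 4\<bar> - 8" using assms by linarith+
  then have "\<bar>B\<bar> * \<bar>B\<bar> \<le> \<bar>2 * B + 4\<bar> * (\<bar>2 * B + 4\<bar> - 8)" by (intro mult_mono) auto
  then show ?thesis by (simp add: power2_eq_square abs_mult[symmetric])
qed

lemma abs_Sw_le_inverse_square:
  assumes w4: "normsq w = 4" and lam_near: "\<bar>lam - real_of_int m\<bar> < 1/10"
    and "Cfun lam v w < 0" "normsq v \<noteq> m" "normsq (vadd v w) \<noteq> m"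
    and B12: "\<bar>real_of_int (zinner v w)\<bar> \<ge> 12"
  shows "\<bar>Sw lam w v\<bar> \<le> 24 / (real_of_int (zinner v w))^2"
proof -
  define B where "B = real_of_int (zinner v w)"
  define f where "f t = real_of_int (normsq t) - lam" for t
  have second_diff: "f (vsub t w) + f (vadd t w) = 2 * f t + 8" for t
  proof -
    have "real_of_int (normsq (vadd t w) + normsq (vsub t w)) = real_of_int (2 * normsq t + 2 * normsq w)"
      using normsq_parallelogram[of t w] by presburger
    then show ?thesis using w4 unfolding f_def by simp
  qed
  have step: "f (vadd v w) - f v = 2 * B + 4"
    using normsq_vadd[of v w] w4 unfolding f_def B_def by simp
  have opposite: "f v * f (vadd v w) < 0"
    and far: "\<bar>f v\<bar> \<ge> 4/5" "\<bar>f (vadd v w)\<bar> \<ge> 4/5"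
    using assms(3-5) abs_of_int_minus_ge[OF _ lam_near]
    by (fastforce simp: Cfun_def cfun_def f_def divide_less_0_iff)+
  have Cfun_f: "Cfun lam t w = 1 / f t * (1 / f (vadd t w))" for t
    by (simp add: Cfun_def cfun_def f_def)
  have "\<bar>Sw lam w v\<bar> \<le> 24 / (\<bar>f (vadd v w) - f v\<bar> * (\<bar>f (vadd v w) - f v\<bar> - 8))"
    unfolding abs_Sw_eq_min Cfun_f vadd_vsub_cancel
    using min_neighbour_sums_bound[OF second_diff[of v] _ opposite far] second_diff[of "vadd v w"]
      step B12 B_def by simp
  also have "\<dots> \<le> 24 / B^2"
    using gap_product_ge_square[of B] B12 unfolding step B_def
    by (intro divide_left_mono) (auto simp: zero_less_mult_iff)
  finally show ?thesis unfolding B_def .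
qed

theorem lemma5p4:
  "\<exists>K::real. \<exists>R0::real. \<forall>(m::int) (lam::real) (v::int \<times> int).
     m \<ge> 1 \<longrightarrow> \<bar>lam - real_of_int m\<bar> < 1/10 \<longrightarrow> sqrt lam \<ge> R0 \<longrightarrow>
     v \<in> V2 lam m (0, 2) \<longrightarrow>
     \<bar>real_of_int (zinner v (0, 2))\<bar> \<ge> root 3 (sqrt lam) \<longrightarrow>
     \<bar>Sw lam (0, 2) v\<bar> \<le> K * (ln \<bar>real_of_int (zinner v (0, 2))\<bar>)^2
                              / (real_of_int (zinner v (0, 2)))^2"
proof (intro exI allI impI)
  fix m :: int and lam :: real and v :: "int \<times> int"
  assume lam_near: "\<bar>lam - real_of_int m\<bar> < 1/10" and R_large: "sqrt lam \<ge> 1728"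
    and v_V2: "v \<in> V2 lam m (0, 2)" and B_large: "\<bar>real_of_int (zinner v (0, 2))\<bar> \<ge> root 3 (sqrt lam)"
    and "m \<ge> 1"
  define B where "B = real_of_int (zinner v (0, 2))"
  have "root 3 (1728::real) = 12" by (rule real_root_pos_unique) auto
  then have B12: "\<bar>B\<bar> \<ge> 12"
    using B_large real_root_le_mono[of 3 1728 "sqrt lam"] R_large unfolding B_def by linarith
  have "\<bar>Sw lam (0, 2) v\<bar> \<le> 24 / B^2"
    using abs_Sw_le_inverse_square[OF _ lam_near] v_V2 B12
    unfolding B_def by (simp add: V2_def normsq_def)
  also have "\<dots> \<le> 24 * (ln \<bar>B\<bar>)^2 / B^2"
  proof -
    have "exp 1 \<le> \<bar>B\<bar>" using exp_le B12 by linarith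
    then have "1 \<le> ln \<bar>B\<bar>" using ln_ge_iff[of "\<bar>B\<bar>" 1] B12 by simp
    then show ?thesis by (intro divide_right_mono) (auto simp: one_le_power)
  qed
  finally show "\<bar>Sw lam (0, 2) v\<bar> \<le> 24 * (ln \<bar>real_of_int (zinner v (0, 2))\<bar>)^2
                              / (real_of_int (zinner v (0, 2)))^2"
    unfolding B_def .
qed

end
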